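(* Let $G$ be a group and $\iota\in G$ an element for which there is a finite normal subgroup $L\lhd G$ such that the image of $\iota$ is central in $G/L$. If $M$ is a gr-odd $\mathbb{Q}[G]$-module, then the group homology $\mathrm{H}_i(G;M)$ vanishes for all $i\geq 0$. The same conclusion holds for group cohomology $\mathrm{H}^i(G;M)$.
   Context: A $\mathbb{Q}[G]$-module $M$ is odd if $\iota\cdot m=-m$ for all $m\in M$; it is gr-odd if it admits a finite filtration by $\mathbb{Q}[G]$-submodules $0=F_{-1}M\subseteq F_0M\subseteq\cdots\subseteq F_kM=M$ with each $F_{i+1}M/F_iM$ odd. *)

theory Defs
  imports "HOL-Algebra.Algebra"
begin

definition rat_rep :: "('g, 'b) monoid_scheme \<Rightarrow> (rat \<Rightarrow> 'm::ab_group_add \<Rightarrow> 'm) \<Rightarrow> ('g \<Rightarrow> 'm \<Rightarrow> 'm) \<Rightarrow> bool" where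
  "rat_rep G scl act \<longleftrightarrow>
     Modules.module scl \<and>
     (\<forall>g\<in>carrier G. \<forall>x y. act g (x + y) = act g x + act g y) \<and>
     (\<forall>g\<in>carrier G. \<forall>q x. act g (scl q x) = scl q (act g x)) \<and>
     (\<forall>x. act \<one>\<^bsub>G\<^esub> x = x) \<and>
     (\<forall>g\<in>carrier G. \<forall>h\<in>carrier G. \<forall>x. act (g \<otimes>\<^bsub>G\<^esub> h) x = act g (act h x))"

definition is_submodule :: "('g, 'b) monoid_scheme \<Rightarrow> (rat \<Rightarrow> 'm::ab_group_add \<Rightarrow> 'm) \<Rightarrow> ('g \<Rightarrow> 'm \<Rightarrow> 'm) \<Rightarrow> 'm set \<Rightarrow> bool" where
  "is_submodule G scl act S \<longleftrightarrow>
     0 \<in> S \<and> (\<forall>x\<in>S. \<forall>y\<in>S. x + y \<in> S) \<and> (\<forall>q. \<forall>x\<in>S. scl q x \<in> S) \<and>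
     (\<forall>g\<in>carrier G. \<forall>x\<in>S. act g x \<in> S)"

text \<open>gr-odd: a finite filtration 0 = F(-1) \<subseteq> F 0 \<subseteq> ... \<subseteq> F k = M by submodules whose
  successive quotients are odd (iota acts as -1 on F(i+1)/F(i), i.e. iota m + m \<in> F i).\<close>
definition gr_odd :: "('g, 'b) monoid_scheme \<Rightarrow> (rat \<Rightarrow> 'm::ab_group_add \<Rightarrow> 'm) \<Rightarrow> ('g \<Rightarrow> 'm \<Rightarrow> 'm) \<Rightarrow> 'g \<Rightarrow> bool" where
  "gr_odd G scl act \<iota> \<longleftrightarrow>
     (\<exists>(F :: nat \<Rightarrow> 'm set) k.
        (\<forall>i\<le>k. is_submodule G scl act (F i)) \<and>
        (\<forall>i<k. F i \<subseteq> F (Suc i)) \<and> F k = UNIV \<and>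
        (\<forall>m\<in>F 0. act \<iota> m = - m) \<and>
        (\<forall>i<k. \<forall>m\<in>F (Suc i). act \<iota> m + m \<in> F i))"

definition tuples :: "('g, 'b) monoid_scheme \<Rightarrow> nat \<Rightarrow> 'g list set" where
  "tuples G n = {\<sigma>. length \<sigma> = n \<and> set \<sigma> \<subseteq> carrier G}"

text \<open>merge G i [g1,...,gn] = [g1,...,g_i g_(i+1),...,gn]  (1 \<le> i < n)\<close>
definition merge :: "('g, 'b) monoid_scheme \<Rightarrow> nat \<Rightarrow> 'g list \<Rightarrow> 'g list" where
  "merge G i \<sigma> = take (i - 1) \<sigma> @ [\<sigma> ! (i - 1) \<otimes>\<^bsub>G\<^esub> \<sigma> ! i] @ drop (i + 1) \<sigma>"

definition alt_sign :: "nat \<Rightarrow> 'm::ab_group_add \<Rightarrow> 'm" where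
  "alt_sign i x = (if even i then x else - x)"

text \<open>Chains C_n(G;M) = M \<otimes> Z[G^n]: finitely supported functions G^n \<rightarrow> M.\<close>
definition chains :: "('g, 'b) monoid_scheme \<Rightarrow> nat \<Rightarrow> ('g list \<Rightarrow> 'm::ab_group_add) set" where
  "chains G n = {c. finite {\<sigma>. c \<sigma> \<noteq> 0} \<and> (\<forall>\<sigma>. c \<sigma> \<noteq> 0 \<longrightarrow> \<sigma> \<in> tuples G n)}"

text \<open>d([g1|...|gn] \<otimes> m) = [g2|...|gn] \<otimes> g1^(-1) m
   + \<Sum>_(i=1..n-1) (-1)^i [..|g_i g_(i+1)|..] \<otimes> m + (-1)^n [g1|...|g_(n-1)] \<otimes> m,
  extended additively; d_0 = 0.\<close>
definition chain_bd :: "('g, 'b) monoid_scheme \<Rightarrow> ('g \<Rightarrow> 'm \<Rightarrow> 'm) \<Rightarrow> nat \<Rightarrow> ('g list \<Rightarrow> 'm::ab_group_add) \<Rightarrow> 'g list \<Rightarrow> 'm" where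
  "chain_bd G act n c \<tau> =
     (if n = 0 then 0 else
      (\<Sum>\<sigma>\<in>{\<sigma>. c \<sigma> \<noteq> 0}.
          (if tl \<sigma> = \<tau> then act (inv\<^bsub>G\<^esub> (hd \<sigma>)) (c \<sigma>) else 0)
        + (\<Sum>i\<in>{1..<n}. if merge G i \<sigma> = \<tau> then alt_sign i (c \<sigma>) else 0)
        + (if butlast \<sigma> = \<tau> then alt_sign n (c \<sigma>) else 0)))"

definition group_homology_vanishes :: "('g, 'b) monoid_scheme \<Rightarrow> ('g \<Rightarrow> 'm \<Rightarrow> 'm) \<Rightarrow> nat \<Rightarrow> 'm::ab_group_add itself \<Rightarrow> bool" where
  "group_homology_vanishes G act i _ \<longleftrightarrow>
     (\<forall>c\<in>(chains G i :: ('g list \<Rightarrow> 'm) set). chain_bd G act i c = (\<lambda>_. 0) \<longrightarrow>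
        (\<exists>b\<in>chains G (Suc i). chain_bd G act (Suc i) b = c))"

definition cochains :: "('g, 'b) monoid_scheme \<Rightarrow> nat \<Rightarrow> ('g list \<Rightarrow> 'm::ab_group_add) set" where
  "cochains G n = {f. \<forall>\<sigma>. \<sigma> \<notin> tuples G n \<longrightarrow> f \<sigma> = 0}"

definition cochain_cobd :: "('g, 'b) monoid_scheme \<Rightarrow> ('g \<Rightarrow> 'm \<Rightarrow> 'm) \<Rightarrow> nat \<Rightarrow> ('g list \<Rightarrow> 'm::ab_group_add) \<Rightarrow> 'g list \<Rightarrow> 'm" where
  "cochain_cobd G act n f \<tau> =
     (if \<tau> \<in> tuples G (Suc n) then
        act (hd \<tau>) (f (tl \<tau>))
        + (\<Sum>i\<in>{1..n}. alt_sign i (f (merge G i \<tau>)))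
        + alt_sign (Suc n) (f (butlast \<tau>))
      else 0)"

definition group_cohomology_vanishes :: "('g, 'b) monoid_scheme \<Rightarrow> ('g \<Rightarrow> 'm \<Rightarrow> 'm) \<Rightarrow> nat \<Rightarrow> 'm::ab_group_add itself \<Rightarrow> bool" where
  "group_cohomology_vanishes G act i _ \<longleftrightarrow>
     (\<forall>f\<in>(cochains G i :: ('g list \<Rightarrow> 'm) set). cochain_cobd G act i f = (\<lambda>_. 0) \<longrightarrow>
        (case i of 0 \<Rightarrow> f = (\<lambda>_. 0)
         | Suc j \<Rightarrow> (\<exists>h\<in>cochains G j. cochain_cobd G act j h = f)))"

definition central_mod :: "('g, 'b) monoid_scheme \<Rightarrow> 'g set \<Rightarrow> 'g \<Rightarrow> bool" where
  "central_mod G L \<iota> \<longleftrightarrow>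
     (\<forall>Y\<in>carrier (G Mod L). (r_coset G L \<iota>) <#>\<^bsub>G\<^esub> Y = Y <#>\<^bsub>G\<^esub> (r_coset G L \<iota>))"

end

theory Submission
  imports Defs
begin

text \<open>
  Let \<open>Y\<close> be the conjugacy class of \<open>\<iota>\<close>; it is finite because it lies in the coset \<open>L \<iota>\<close>.
  Inserting an element of \<open>Y\<close> at every position of a bar tuple, with alternating signs, gives
  a homotopy \<open>h\<close> with \<open>\<delta> h + h \<delta> = \<Sum>\<^sub>y\<^sub>\<in>\<^sub>Y (y - 1)\<close> on cochains (and likewise on chains):
  the terms in which the inserted element is multiplied into a neighbour from the left and from
  the right cancel because \<open>Y\<close> is closed under conjugation. So \<open>\<Sum>\<^sub>y\<^sub>\<in>\<^sub>Y (y - 1)\<close>, which equals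
  \<open>N - 2|Y|\<close> for \<open>N = \<Sum>\<^sub>y\<^sub>\<in>\<^sub>Y (y + 1)\<close>, acts as zero on (co)homology. Every \<open>y \<in> Y\<close> is
  conjugate to \<open>\<iota>\<close>, hence acts as \<open>-1\<close> on the graded pieces of a gr-odd filtration, so \<open>N\<close>
  lowers the filtration and is nilpotent. Then \<open>N - 2|Y|\<close> has a \<open>G\<close>-equivariant inverse, a finite
  Neumann series in \<open>N\<close>, and every (co)cycle is a (co)boundary.
\<close>

section \<open>Bar tuples: insertion and merging\<close>

definition insert_nth :: "nat \<Rightarrow> 'a \<Rightarrow> 'a list \<Rightarrow> 'a list" where
  "insert_nth i x xs = take i xs @ x # drop i xs"

lemma length_insert_nth [simp]: "i \<le> length xs \<Longrightarrow> length (insert_nth i x xs) = Suc (length xs)"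
  by (simp add: insert_nth_def)

lemma set_insert_nth: "i \<le> length xs \<Longrightarrow> set (insert_nth i x xs) = insert x (set xs)"
  unfolding insert_nth_def by (metis Un_insert_right append_take_drop_id list.set(2) set_append)

lemma insert_nth_0 [simp]: "insert_nth 0 x xs = x # xs"
  by (simp add: insert_nth_def)

lemma insert_nth_Suc_Cons [simp]: "insert_nth (Suc i) x (y # ys) = y # insert_nth i x ys"
  by (simp add: insert_nth_def)

lemma insert_nth_append: "insert_nth (length xs + i) x (xs @ ys) = xs @ insert_nth i x ys"
  by (simp add: insert_nth_def)

lemma insert_nth_append_left: "i \<le> length xs \<Longrightarrow> insert_nth i x (xs @ ys) = insert_nth i x xs @ ys"
  by (simp add: insert_nth_def)

lemma butlast_insert_nth_length [simp]: "butlast (insert_nth (length xs) x xs) = xs"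
  by (simp add: insert_nth_def)

lemma butlast_insert_nth: "i < length xs \<Longrightarrow> butlast (insert_nth i x xs) = insert_nth i x (butlast xs)"
  by (simp add: insert_nth_def butlast_append take_butlast drop_butlast)

lemma merge_Suc_append:
  "length xs = j \<Longrightarrow> merge G (Suc j) (xs @ a # b # ys) = xs @ (a \<otimes>\<^bsub>G\<^esub> b) # ys"
  by (simp add: merge_def nth_append)

lemma take_nth_nth_drop:
  "Suc j < length xs \<Longrightarrow> xs = take j xs @ xs ! j # xs ! Suc j # drop (Suc (Suc j)) xs"
  by (simp add: Cons_nth_drop_Suc)

lemma merge_insert_nth_less:
  assumes "j < i" "i < length xs"
  shows "merge G (Suc j) (insert_nth (Suc i) x xs) = insert_nth i x (merge G (Suc j) xs)"
proof -
  let ?A = "take j xs" and ?a = "xs ! j" and ?b = "xs ! Suc j" and ?D = "drop (Suc (Suc j)) xs"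
  have xs: "xs = ?A @ ?a # ?b # ?D" by (rule take_nth_nth_drop) (use assms in simp)
  have len: "length ?A = j" using assms by simp
  have i: "Suc i = length ?A + Suc (Suc (i - Suc j))" and i': "i = length ?A + Suc (i - Suc j)"
    using len assms by simp_all
  have "merge G (Suc j) (insert_nth (Suc i) x xs) = ?A @ (?a \<otimes>\<^bsub>G\<^esub> ?b) # insert_nth (i - Suc j) x ?D"
    by (subst xs, subst i, simp only: insert_nth_append insert_nth_Suc_Cons merge_Suc_append[OF len])
  also have "\<dots> = insert_nth i x (?A @ (?a \<otimes>\<^bsub>G\<^esub> ?b) # ?D)"
    by (subst i', simp only: insert_nth_append insert_nth_Suc_Cons)
  also have "?A @ (?a \<otimes>\<^bsub>G\<^esub> ?b) # ?D = merge G (Suc j) xs"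
    by (subst (2) xs, rule merge_Suc_append[OF len, symmetric])
  finally show ?thesis .
qed

lemma merge_insert_nth_greater:
  assumes "i < j" "j < length xs"
  shows "merge G (Suc j) (insert_nth i x xs) = insert_nth i x (merge G j xs)"
proof -
  obtain j' where j: "j = Suc j'" using assms by (cases j) auto
  let ?A = "take j' xs" and ?a = "xs ! j'" and ?b = "xs ! j" and ?D = "drop (Suc j) xs"
  have xs: "xs = ?A @ ?a # ?b # ?D" using take_nth_nth_drop[of j' xs] assms j by simp
  have len: "length ?A = j'" and i: "i \<le> length ?A" using assms j by simp_all
  have len': "length (insert_nth i x ?A) = j" using len i j by simp
  have "merge G (Suc j) (insert_nth i x xs) = insert_nth i x ?A @ (?a \<otimes>\<^bsub>G\<^esub> ?b) # ?D"
    by (subst xs, simp only: insert_nth_append_left[OF i] append_Cons merge_Suc_append[OF len'])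
  also have "\<dots> = insert_nth i x (?A @ (?a \<otimes>\<^bsub>G\<^esub> ?b) # ?D)"
    by (rule insert_nth_append_left[OF i, symmetric])
  also have "?A @ (?a \<otimes>\<^bsub>G\<^esub> ?b) # ?D = merge G j xs"
    by (subst (2) xs, unfold j, rule merge_Suc_append[OF len, symmetric])
  finally show ?thesis .
qed

lemma merge_insert_nth_left:
  assumes "i < length xs"
  shows "merge G (Suc i) (insert_nth (Suc i) x xs) = xs[i := xs ! i \<otimes>\<^bsub>G\<^esub> x]"
proof -
  have "insert_nth (Suc i) x xs = take i xs @ xs ! i # x # drop (Suc i) xs"
    using assms by (simp add: insert_nth_def take_Suc_conv_app_nth)
  thus ?thesis using assms by (simp add: merge_Suc_append upd_conv_take_nth_drop)
qed

lemma merge_insert_nth_right: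
  assumes "i < length xs"
  shows "merge G (Suc i) (insert_nth i x xs) = xs[i := x \<otimes>\<^bsub>G\<^esub> xs ! i]"
proof -
  have "insert_nth i x xs = take i xs @ x # xs ! i # drop (Suc i) xs"
    using assms by (simp add: insert_nth_def Cons_nth_drop_Suc)
  thus ?thesis using assms by (simp add: merge_Suc_append upd_conv_take_nth_drop)
qed

lemma tuples_Suc_hd: "\<sigma> \<in> tuples G (Suc n) \<Longrightarrow> hd \<sigma> \<in> carrier G"
  by (cases \<sigma>) (auto simp: tuples_def)

lemma tuples_Suc_tl: "\<sigma> \<in> tuples G (Suc n) \<Longrightarrow> tl \<sigma> \<in> tuples G n"
  by (cases \<sigma>) (auto simp: tuples_def)

lemma tuples_Suc_butlast: "\<sigma> \<in> tuples G (Suc n) \<Longrightarrow> butlast \<sigma> \<in> tuples G n"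
  by (auto simp: tuples_def dest: in_set_butlastD)

lemma tuples_insert_nth:
  "\<sigma> \<in> tuples G n \<Longrightarrow> x \<in> carrier G \<Longrightarrow> i \<le> n \<Longrightarrow> insert_nth i x \<sigma> \<in> tuples G (Suc n)"
  by (auto simp: tuples_def set_insert_nth)

lemma (in group) tuples_Suc_merge:
  assumes "\<sigma> \<in> tuples G (Suc n)" "1 \<le> j" "j \<le> n"
  shows "merge G j \<sigma> \<in> tuples G n"
proof -
  have len: "length \<sigma> = Suc n" and \<sigma>: "set \<sigma> \<subseteq> carrier G" using assms by (auto simp: tuples_def)
  have "\<sigma> ! (j - 1) \<in> carrier G" "\<sigma> ! j \<in> carrier G" using len \<sigma> assms by (auto simp: subset_iff)
  moreover have "set (take (j - 1) \<sigma>) \<subseteq> carrier G" "set (drop (j + 1) \<sigma>) \<subseteq> carrier G"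
    using \<sigma> by (auto dest: in_set_takeD in_set_dropD)
  ultimately show ?thesis using len assms by (auto simp: tuples_def merge_def)
qed

lemma alt_sign_0 [simp]: "alt_sign 0 y = y"
  by (simp add: alt_sign_def)

lemma alt_sign_zero [simp]: "alt_sign i 0 = 0"
  by (simp add: alt_sign_def)

lemma alt_sign_Suc: "alt_sign (Suc i) y = - alt_sign i y"
  by (simp add: alt_sign_def)

lemma alt_sign_minus: "alt_sign i (- y) = - alt_sign i y"
  by (simp add: alt_sign_def)

lemma alt_sign_add: "alt_sign i (y + z) = alt_sign i y + alt_sign i z"
  by (simp add: alt_sign_def)

lemma alt_sign_sum: "alt_sign i (sum f A) = (\<Sum>a\<in>A. alt_sign i (f a))"
  by (simp add: alt_sign_def sum_negf)

lemma alt_sign_alt_sign: "alt_sign i (alt_sign j y) = alt_sign (i + j) y"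
  by (simp add: alt_sign_def)

lemma alt_sign_alt_sign_same [simp]: "alt_sign i (alt_sign i y) = y"
  by (simp add: alt_sign_def)

lemma alt_sign_if_zero: "alt_sign i (if b then y else 0) = (if b then alt_sign i y else 0)"
  by simp

lemma additive_alt_sign: "additive \<phi> \<Longrightarrow> \<phi> (alt_sign i y) = alt_sign i (\<phi> y)"
  by (simp add: alt_sign_def additive.minus)

lemma sum_atLeastAtMost_split_around:
  fixes g :: "nat \<Rightarrow> 'a::comm_monoid_add"
  assumes "i \<le> n"
  shows "sum g {1..n} = sum g {1..<i} + (if 1 \<le> i then g i else 0)
                        + (if i < n then g (Suc i) else 0) + sum g {Suc (Suc i)..n}"
proof (cases "i = 0")
  case True
  then show ?thesis
    by (cases n) (auto simp: sum.atLeast_Suc_atMost add.assoc)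
next
  case False
  have "sum g {1..n} = sum g {1..<i} + sum g {i..<Suc n}"
  proof -
    have "sum g {1..<i} + sum g {i..<Suc n} = sum g {1..<Suc n}"
      using False assms by (intro sum.atLeastLessThan_concat) auto
    thus ?thesis by (simp add: atLeastLessThanSuc_atLeastAtMost)
  qed
  also have "sum g {i..<Suc n} = g i + sum g {Suc i..n}"
    using assms by (simp add: atLeastLessThanSuc_atLeastAtMost sum.atLeast_Suc_atMost)
  also have "sum g {Suc i..n} = (if i < n then g (Suc i) else 0) + sum g {Suc (Suc i)..n}"
    by (auto simp: sum.atLeast_Suc_atMost)
  finally show ?thesis using False by (simp add: add.assoc)
qed

definition alt_insert_sum :: "'g \<Rightarrow> nat \<Rightarrow> ('g list \<Rightarrow> 'a::ab_group_add) \<Rightarrow> 'g list \<Rightarrow> 'a" where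
  "alt_insert_sum x n \<Phi> \<sigma> = (\<Sum>i\<in>{0..n}. alt_sign i (\<Phi> (insert_nth i x \<sigma>)))"

definition insert_sum :: "'g set \<Rightarrow> nat \<Rightarrow> ('g list \<Rightarrow> 'a::ab_group_add) \<Rightarrow> 'g list \<Rightarrow> 'a" where
  "insert_sum Y n \<Phi> \<sigma> = (\<Sum>x\<in>Y. alt_insert_sum x n \<Phi> \<sigma>)"

text \<open>
  \<open>face_sum G \<Phi>\<^sub>0 \<Phi> n [g\<^sub>1|\<dots>|g\<^sub>n]\<close> is
  \<open>\<Phi>\<^sub>0 g\<^sub>1 [g\<^sub>2|\<dots>|g\<^sub>n] + \<Sum>\<^sub>0\<^sub><\<^sub>j\<^sub><\<^sub>n (-1)\<^sup>j \<Phi> [\<dots>|g\<^sub>j g\<^sub>j\<^sub>+\<^sub>1|\<dots>] + (-1)\<^sup>n \<Phi> [g\<^sub>1|\<dots>|g\<^sub>n\<^sub>-\<^sub>1]\<close>,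
  the common shape of the bar differential and codifferential.
\<close>
definition face_sum ::
  "('g, 'b) monoid_scheme \<Rightarrow> ('g \<Rightarrow> 'g list \<Rightarrow> 'a::ab_group_add) \<Rightarrow> ('g list \<Rightarrow> 'a) \<Rightarrow> nat \<Rightarrow> 'g list \<Rightarrow> 'a"
where
  "face_sum G \<Phi>\<^sub>0 \<Phi> n \<sigma> =
     (if n = 0 then 0 else
        \<Phi>\<^sub>0 (hd \<sigma>) (tl \<sigma>) + (\<Sum>j\<in>{1..<n}. alt_sign j (\<Phi> (merge G j \<sigma>))) + alt_sign n (\<Phi> (butlast \<sigma>)))"

lemma face_sum_Suc:
  "face_sum G \<Phi>\<^sub>0 \<Phi> (Suc n) \<sigma> =
     \<Phi>\<^sub>0 (hd \<sigma>) (tl \<sigma>) + (\<Sum>j\<in>{1..<Suc n}. alt_sign j (\<Phi> (merge G j \<sigma>))) + alt_sign (Suc n) (\<Phi> (butlast \<sigma>))"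
  by (simp add: face_sum_def)

lemma alt_insert_sum_add:
  "alt_insert_sum x n (\<lambda>r. F r + H r) \<sigma> = alt_insert_sum x n F \<sigma> + alt_insert_sum x n H \<sigma>"
  by (simp add: alt_insert_sum_def alt_sign_add sum.distrib)

lemma face_sum_additive:
  assumes "additive \<phi>"
  shows "\<phi> (face_sum G \<Phi>\<^sub>0 \<Phi> n \<sigma>) = face_sum G (\<lambda>g r. \<phi> (\<Phi>\<^sub>0 g r)) (\<lambda>r. \<phi> (\<Phi> r)) n \<sigma>"
  using assms by (simp add: face_sum_def additive.add additive.sum additive_alt_sign additive.zero[OF assms])

lemma face_sum_cong:
  "(\<And>r. \<Phi>\<^sub>0 (hd \<sigma>) r = \<Psi>\<^sub>0 (hd \<sigma>) r) \<Longrightarrow> (\<And>r. \<Phi> r = \<Psi> r) \<Longrightarrow> face_sum G \<Phi>\<^sub>0 \<Phi> n \<sigma> = face_sum G \<Psi>\<^sub>0 \<Psi> n \<sigma>"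
  by (simp add: face_sum_def)

definition bar_face :: "('g, 'b) monoid_scheme \<Rightarrow> nat \<Rightarrow> nat \<Rightarrow> 'g list \<Rightarrow> 'g list" where
  "bar_face G n j \<sigma> = (if j = 0 then tl \<sigma> else if j < n then merge G j \<sigma> else butlast \<sigma>)"

lemma face_sum_eq_sum_bar_face:
  assumes F: "\<And>r. additive (F r)"
  shows "face_sum G (\<lambda>g r. F r (a g)) (\<lambda>r. F r m) (Suc p) \<sigma>
       = (\<Sum>j\<in>{0..Suc p}. F (bar_face G (Suc p) j \<sigma>) (if j = 0 then a (hd \<sigma>) else alt_sign j m))"
proof -
  have split: "(\<Sum>j\<in>{0..Suc p}. f j) = f 0 + (\<Sum>j\<in>{1..<Suc p}. f j) + f (Suc p)"
    for f :: "nat \<Rightarrow> 'z::comm_monoid_add"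
    by (simp add: sum.atLeast0_atMost_Suc sum.atLeast_Suc_atMost atLeastLessThanSuc_atLeastAtMost)
  have inner: "(\<Sum>j\<in>{1..<Suc p}. F (bar_face G (Suc p) j \<sigma>) (if j = 0 then a (hd \<sigma>) else alt_sign j m))
      = (\<Sum>j\<in>{1..<Suc p}. alt_sign j (F (merge G j \<sigma>) m))"
    by (rule sum.cong) (auto simp: bar_face_def additive_alt_sign[OF F])
  show ?thesis
    unfolding split inner face_sum_Suc by (simp add: bar_face_def additive_alt_sign[OF F])
qed

lemma insert_sum_add: "insert_sum Y n (\<lambda>r. F r + H r) \<sigma> = insert_sum Y n F \<sigma> + insert_sum Y n H \<sigma>"
  by (simp add: insert_sum_def alt_insert_sum_add sum.distrib)

lemma alt_insert_sum_hd_tl: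
  assumes "length s = Suc p"
  shows "alt_insert_sum x (Suc p) (\<lambda>r. \<Phi> (hd r) (tl r)) s = \<Phi> x s - alt_insert_sum x p (\<Phi> (hd s)) (tl s)"
proof -
  obtain a s' where "s = a # s'" using assms by (cases s) auto
  then show ?thesis
    unfolding alt_insert_sum_def
    by (subst sum.atLeast0_atMost_Suc_shift) (simp add: alt_sign_Suc sum_negf)
qed

lemma alt_insert_sum_butlast:
  assumes "length s = Suc p"
  shows "alt_insert_sum x (Suc p) (\<lambda>r. alt_sign (Suc (Suc p)) (\<Phi> (butlast r))) s
       = - alt_sign (Suc p) (alt_insert_sum x p \<Phi> (butlast s)) - \<Phi> s"
proof -
  have "alt_sign i (alt_sign (Suc (Suc p)) (\<Phi> (butlast (insert_nth i x s))))
      = - alt_sign (Suc p) (alt_sign i (\<Phi> (insert_nth i x (butlast s))))" if "i \<le> p" for i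
    using that assms by (simp add: butlast_insert_nth alt_sign_alt_sign alt_sign_Suc add.commute)
  moreover have "alt_sign (Suc p) (alt_sign (Suc (Suc p)) (\<Phi> (butlast (insert_nth (Suc p) x s)))) = - \<Phi> s"
    using butlast_insert_nth_length[of s x] assms by (simp add: alt_sign_alt_sign alt_sign_def)
  ultimately show ?thesis
    by (simp add: alt_insert_sum_def sum.atLeast0_atMost_Suc alt_sign_sum sum_negf)
qed

lemma merge_insert_nth_sum_split:
  assumes len: "length s = Suc p" and i: "i \<le> Suc p"
  shows "(\<Sum>j\<in>{1..Suc p}. alt_sign j (\<Phi> (merge G j (insert_nth i x s))))
       = (\<Sum>j\<in>{1..<i}. alt_sign j (\<Phi> (insert_nth (i - 1) x (merge G j s))))
         + (if 1 \<le> i then alt_sign i (\<Phi> (s[i - 1 := s ! (i - 1) \<otimes>\<^bsub>G\<^esub> x])) else 0)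
         + (if i < Suc p then alt_sign (Suc i) (\<Phi> (s[i := x \<otimes>\<^bsub>G\<^esub> s ! i])) else 0)
         + (\<Sum>j\<in>{Suc (Suc i)..Suc p}. alt_sign j (\<Phi> (insert_nth i x (merge G (j - 1) s))))"
proof -
  have less: "merge G j (insert_nth i x s) = insert_nth (i - 1) x (merge G j s)" if j: "j \<in> {1..<i}" for j
  proof -
    obtain j' i' where "j = Suc j'" "i = Suc i'" using j by (cases j; cases i) auto
    then show ?thesis using j len i merge_insert_nth_less[of j' i' s G x] by simp
  qed
  have greater: "merge G j (insert_nth i x s) = insert_nth i x (merge G (j - 1) s)"
    if j: "j \<in> {Suc (Suc i)..Suc p}" for j
  proof -
    obtain j' where "j = Suc j'" using j by (cases j) auto
    then show ?thesis using j len merge_insert_nth_greater[of i j' s G x] by simp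
  qed
  have left: "merge G i (insert_nth i x s) = s[i - 1 := s ! (i - 1) \<otimes>\<^bsub>G\<^esub> x]" if i1: "1 \<le> i"
  proof -
    obtain i' where "i = Suc i'" using i1 by (cases i) auto
    then show ?thesis using len i merge_insert_nth_left[of i' s G x] by simp
  qed
  have right: "merge G (Suc i) (insert_nth i x s) = s[i := x \<otimes>\<^bsub>G\<^esub> s ! i]" if "i < Suc p"
    using that len merge_insert_nth_right[of i s G x] by simp
  have "(\<Sum>j\<in>{1..<i}. alt_sign j (\<Phi> (merge G j (insert_nth i x s))))
      = (\<Sum>j\<in>{1..<i}. alt_sign j (\<Phi> (insert_nth (i - 1) x (merge G j s))))"
    by (rule sum.cong) (simp_all only: less)
  moreover have "(\<Sum>j\<in>{Suc (Suc i)..Suc p}. alt_sign j (\<Phi> (merge G j (insert_nth i x s))))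
      = (\<Sum>j\<in>{Suc (Suc i)..Suc p}. alt_sign j (\<Phi> (insert_nth i x (merge G (j - 1) s))))"
    by (rule sum.cong) (simp_all only: greater)
  ultimately show ?thesis
    unfolding sum_atLeastAtMost_split_around[OF i] by (simp add: left right)
qed

lemma alt_insert_sum_merge_apart:
  "(\<Sum>i\<in>{0..Suc p}. alt_sign i (\<Sum>j\<in>{1..<i}. alt_sign j (\<Phi> (insert_nth (i - 1) x (merge G j s)))))
   + (\<Sum>i\<in>{0..Suc p}. alt_sign i
        (\<Sum>j\<in>{Suc (Suc i)..Suc p}. alt_sign j (\<Phi> (insert_nth i x (merge G (j - 1) s)))))
   = - (\<Sum>j\<in>{1..<Suc p}. alt_sign j (alt_insert_sum x p \<Phi> (merge G j s)))"
proof -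
  define f where "f i j = alt_sign j (\<Phi> (insert_nth i x (merge G j s)))" for i j
  have A: "(\<Sum>i\<in>{0..Suc p}. alt_sign i (\<Sum>j\<in>{1..<i}. alt_sign j (\<Phi> (insert_nth (i - 1) x (merge G j s)))))
      = - (\<Sum>i\<in>{0..p}. alt_sign i (\<Sum>j\<in>{1..<Suc i}. f i j))"
    by (subst sum.atLeast0_atMost_Suc_shift) (simp add: f_def alt_sign_Suc sum_negf)
  have "(\<Sum>j\<in>{Suc (Suc i)..Suc p}. alt_sign j (\<Phi> (insert_nth i x (merge G (j - 1) s))))
      = - (\<Sum>j\<in>{Suc i..<Suc p}. f i j)" for i
    unfolding f_def
    by (simp only: sum.shift_bounds_cl_Suc_ivl atLeastLessThanSuc_atLeastAtMost)
      (simp add: alt_sign_Suc sum_negf)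
  then have D: "(\<Sum>i\<in>{0..Suc p}. alt_sign i
        (\<Sum>j\<in>{Suc (Suc i)..Suc p}. alt_sign j (\<Phi> (insert_nth i x (merge G (j - 1) s)))))
      = - (\<Sum>i\<in>{0..p}. alt_sign i (\<Sum>j\<in>{Suc i..<Suc p}. f i j))"
    by (simp add: sum.atLeast0_atMost_Suc alt_sign_minus sum_negf del: sum.op_ivl_Suc)
  have "alt_sign i (\<Sum>j\<in>{1..<Suc i}. f i j) + alt_sign i (\<Sum>j\<in>{Suc i..<Suc p}. f i j)
      = alt_sign i (\<Sum>j\<in>{1..<Suc p}. f i j)" if "i \<in> {0..p}" for i
  proof -
    have "(\<Sum>j\<in>{1..<Suc i}. f i j) + (\<Sum>j\<in>{Suc i..<Suc p}. f i j) = (\<Sum>j\<in>{1..<Suc p}. f i j)"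
      using that by (intro sum.atLeastLessThan_concat) auto
    then show ?thesis by (simp only: alt_sign_add[symmetric])
  qed
  then have "(\<Sum>i\<in>{0..p}. alt_sign i (\<Sum>j\<in>{1..<Suc i}. f i j))
      + (\<Sum>i\<in>{0..p}. alt_sign i (\<Sum>j\<in>{Suc i..<Suc p}. f i j))
      = (\<Sum>i\<in>{0..p}. alt_sign i (\<Sum>j\<in>{1..<Suc p}. f i j))"
    unfolding sum.distrib[symmetric] by (rule sum.cong[OF refl])
  also have "\<dots> = (\<Sum>j\<in>{1..<Suc p}. alt_sign j (alt_insert_sum x p \<Phi> (merge G j s)))"
    unfolding f_def alt_insert_sum_def alt_sign_sum alt_sign_alt_sign
    by (subst sum.swap) (simp add: add.commute)
  finally show ?thesis
    unfolding A D minus_add_distrib[symmetric] by (rule arg_cong)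
qed

lemma alt_insert_sum_merge:
  assumes len: "length s = Suc p"
  shows "alt_insert_sum x (Suc p) (\<lambda>r. \<Sum>j\<in>{1..<Suc (Suc p)}. alt_sign j (\<Phi> (merge G j r))) s
       = (\<Sum>i\<in>{0..p}. \<Phi> (s[i := s ! i \<otimes>\<^bsub>G\<^esub> x])) - (\<Sum>i\<in>{0..p}. \<Phi> (s[i := x \<otimes>\<^bsub>G\<^esub> s ! i]))
         - (\<Sum>j\<in>{1..<Suc p}. alt_sign j (alt_insert_sum x p \<Phi> (merge G j s)))"
proof -
  define A where "A i = (\<Sum>j\<in>{1..<i}. alt_sign j (\<Phi> (insert_nth (i - 1) x (merge G j s))))" for i
  define L where "L i = (if 1 \<le> i then alt_sign i (\<Phi> (s[i - 1 := s ! (i - 1) \<otimes>\<^bsub>G\<^esub> x])) else 0)" for i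
  define R where "R i = (if i < Suc p then alt_sign (Suc i) (\<Phi> (s[i := x \<otimes>\<^bsub>G\<^esub> s ! i])) else 0)" for i
  define D where "D i = (\<Sum>j\<in>{Suc (Suc i)..Suc p}. alt_sign j (\<Phi> (insert_nth i x (merge G (j - 1) s))))" for i
  have "alt_insert_sum x (Suc p) (\<lambda>r. \<Sum>j\<in>{1..<Suc (Suc p)}. alt_sign j (\<Phi> (merge G j r))) s
      = (\<Sum>i\<in>{0..Suc p}. alt_sign i (A i + L i + R i + D i))"
    unfolding alt_insert_sum_def atLeastLessThanSuc_atLeastAtMost
  proof (rule sum.cong[OF refl])
    fix i assume "i \<in> {0..Suc p}"
    then show "alt_sign i (\<Sum>j\<in>{1..Suc p}. alt_sign j (\<Phi> (merge G j (insert_nth i x s))))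
             = alt_sign i (A i + L i + R i + D i)"
      unfolding A_def L_def R_def D_def by (subst merge_insert_nth_sum_split[OF len]) simp_all
  qed
  also have "\<dots> = (\<Sum>i\<in>{0..Suc p}. alt_sign i (A i)) + (\<Sum>i\<in>{0..Suc p}. alt_sign i (D i))
      + (\<Sum>i\<in>{0..Suc p}. alt_sign i (L i)) + (\<Sum>i\<in>{0..Suc p}. alt_sign i (R i))"
    by (simp add: alt_sign_add sum.distrib)
  also have "(\<Sum>i\<in>{0..Suc p}. alt_sign i (A i)) + (\<Sum>i\<in>{0..Suc p}. alt_sign i (D i))
      = - (\<Sum>j\<in>{1..<Suc p}. alt_sign j (alt_insert_sum x p \<Phi> (merge G j s)))"
    unfolding A_def D_def by (rule alt_insert_sum_merge_apart)
  also have "(\<Sum>i\<in>{0..Suc p}. alt_sign i (L i)) = (\<Sum>i\<in>{0..p}. \<Phi> (s[i := s ! i \<otimes>\<^bsub>G\<^esub> x]))"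
    by (subst sum.atLeast0_atMost_Suc_shift) (simp add: L_def)
  also have "(\<Sum>i\<in>{0..Suc p}. alt_sign i (R i)) = - (\<Sum>i\<in>{0..p}. \<Phi> (s[i := x \<otimes>\<^bsub>G\<^esub> s ! i]))"
  proof -
    have "(\<Sum>i\<in>{0..p}. alt_sign i (R i)) = (\<Sum>i\<in>{0..p}. - \<Phi> (s[i := x \<otimes>\<^bsub>G\<^esub> s ! i]))"
      by (intro sum.cong) (auto simp: R_def alt_sign_Suc alt_sign_minus)
    then show ?thesis by (simp add: sum.atLeast0_atMost_Suc R_def sum_negf)
  qed
  finally show ?thesis by (simp add: algebra_simps)
qed

section \<open>Conjugation-closed sets and the homotopy formula\<close>

definition conj_closed :: "('g, 'b) monoid_scheme \<Rightarrow> 'g set \<Rightarrow> bool" where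
  "conj_closed G Y \<longleftrightarrow> Y \<subseteq> carrier G \<and> (\<forall>g\<in>carrier G. \<forall>y\<in>Y. g \<otimes>\<^bsub>G\<^esub> y \<otimes>\<^bsub>G\<^esub> inv\<^bsub>G\<^esub> g \<in> Y)"

definition conjugacy_class :: "('g, 'b) monoid_scheme \<Rightarrow> 'g \<Rightarrow> 'g set" where
  "conjugacy_class G x = {g \<otimes>\<^bsub>G\<^esub> x \<otimes>\<^bsub>G\<^esub> inv\<^bsub>G\<^esub> g | g. g \<in> carrier G}"

context group
begin

lemma conj_closed_conjugacy_class:
  assumes "\<iota> \<in> carrier G"
  shows "conj_closed G (conjugacy_class G \<iota>)"
  unfolding conj_closed_def conjugacy_class_def
proof safe
  fix h g assume h: "h \<in> carrier G" and g: "g \<in> carrier G"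
  have "h \<otimes> (g \<otimes> \<iota> \<otimes> inv g) \<otimes> inv h = (h \<otimes> g) \<otimes> \<iota> \<otimes> inv (h \<otimes> g)"
    using g h assms by (simp add: inv_mult_group m_assoc)
  then show "\<exists>g'. h \<otimes> (g \<otimes> \<iota> \<otimes> inv g) \<otimes> inv h = g' \<otimes> \<iota> \<otimes> inv g' \<and> g' \<in> carrier G"
    using g h by blast
qed (use assms in auto)

lemma conj_closed_image_inv:
  assumes "conj_closed G Y"
  shows "conj_closed G ((\<lambda>y. inv y) ` Y)"
  unfolding conj_closed_def
proof safe
  fix g y assume g: "g \<in> carrier G" and y: "y \<in> Y"
  have "y \<in> carrier G" using assms y by (auto simp: conj_closed_def)
  then have "g \<otimes> inv y \<otimes> inv g = inv (g \<otimes> y \<otimes> inv g)"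
    using g by (simp add: inv_mult_group m_assoc)
  moreover have "g \<otimes> y \<otimes> inv g \<in> Y" using assms g y by (auto simp: conj_closed_def)
  ultimately show "g \<otimes> inv y \<otimes> inv g \<in> (\<lambda>y. inv y) ` Y" by blast
qed (use assms in \<open>auto simp: conj_closed_def\<close>)

lemma conj_closed_bij_betw:
  assumes Y: "conj_closed G Y" and g: "g \<in> carrier G"
  shows "bij_betw (\<lambda>y. g \<otimes> y \<otimes> inv g) Y Y"
proof (rule bij_betw_imageI)
  have Yc: "Y \<subseteq> carrier G" using Y by (simp add: conj_closed_def)
  show "inj_on (\<lambda>y. g \<otimes> y \<otimes> inv g) Y"
    using Yc g by (intro inj_onI) (auto dest: conjugation_is_inj)
  show "(\<lambda>y. g \<otimes> y \<otimes> inv g) ` Y = Y"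
  proof
    show "(\<lambda>y. g \<otimes> y \<otimes> inv g) ` Y \<subseteq> Y" using Y g by (auto simp: conj_closed_def)
    show "Y \<subseteq> (\<lambda>y. g \<otimes> y \<otimes> inv g) ` Y"
    proof
      fix y assume y: "y \<in> Y"
      then have "inv g \<otimes> y \<otimes> inv (inv g) \<in> Y" using Y g unfolding conj_closed_def by blast
      moreover have "y = g \<otimes> (inv g \<otimes> y \<otimes> inv (inv g)) \<otimes> inv g"
        using y Yc g by (simp add: m_assoc subsetD) (simp add: m_assoc[symmetric] subsetD)
      ultimately show "y \<in> (\<lambda>y. g \<otimes> y \<otimes> inv g) ` Y" by blast
    qed
  qed
qed

lemma sum_conj_closed_mult_commute:
  assumes Y: "conj_closed G Y" and g: "g \<in> carrier G"
  shows "(\<Sum>y\<in>Y. F (g \<otimes> y)) = (\<Sum>y\<in>Y. F (y \<otimes> g))"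
proof -
  have "(\<Sum>y\<in>Y. F (y \<otimes> g)) = (\<Sum>y\<in>Y. F ((g \<otimes> y \<otimes> inv g) \<otimes> g))"
    using sum.reindex_bij_betw[OF conj_closed_bij_betw[OF Y g], of "\<lambda>y. F (y \<otimes> g)"] by simp
  also have "\<dots> = (\<Sum>y\<in>Y. F (g \<otimes> y))"
    using Y g by (intro sum.cong) (auto simp: m_assoc conj_closed_def subsetD)
  finally show ?thesis by simp
qed

lemma conjugacy_class_mem: "x \<in> carrier G \<Longrightarrow> x \<in> conjugacy_class G x"
  unfolding conjugacy_class_def by (rule CollectI, rule exI[of _ \<one>]) simp

lemma finite_conjugacy_class_if_central_mod:
  assumes L: "L \<lhd> G" "finite L" "central_mod G L \<iota>" and \<iota>: "\<iota> \<in> carrier G"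
  shows "finite (conjugacy_class G \<iota>)"
proof -
  have "conjugacy_class G \<iota> \<subseteq> (\<lambda>l. l \<otimes> \<iota>) ` L"
  proof
    fix y assume "y \<in> conjugacy_class G \<iota>"
    then obtain g where g: "g \<in> carrier G" "y = g \<otimes> \<iota> \<otimes> inv g" by (auto simp: conjugacy_class_def)
    have sub: "subgroup L G" using L(1) by (rule normal_imp_subgroup)
    have "L #> g \<in> carrier (G Mod L)" using g by (auto simp: FactGroup_def RCOSETS_def)
    then have "(L #> \<iota>) <#> (L #> g) = (L #> g) <#> (L #> \<iota>)"
      using L(3) unfolding central_mod_def by blast
    then have "L #> (\<iota> \<otimes> g) = L #> (g \<otimes> \<iota>)"
      using normal.rcos_sum[OF L(1)] g \<iota> by simp
    moreover have "g \<otimes> \<iota> \<in> L #> (g \<otimes> \<iota>)" using g \<iota> sub by (intro rcos_self) auto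
    ultimately obtain l where l: "l \<in> L" "g \<otimes> \<iota> = l \<otimes> (\<iota> \<otimes> g)"
      unfolding r_coset_def by auto
    have "l \<in> carrier G" using l sub subgroup.subset by blast
    then have "y = l \<otimes> \<iota>" using g l \<iota> by (simp add: m_assoc)
    then show "y \<in> (\<lambda>l. l \<otimes> \<iota>) ` L" using l by blast
  qed
  then show ?thesis using L(2) finite_subset by blast
qed

text \<open>
  The homotopy formula for arbitrary face data \<open>\<Phi>\<^sub>0, \<Phi>\<close>; the cochain and the chain versions
  are both instances.
\<close>
lemma insert_sum_face_sum:
  assumes Y: "conj_closed G Y" and len: "length s = n" and s: "set s \<subseteq> carrier G"
  shows "insert_sum Y n (face_sum G \<Phi>\<^sub>0 \<Phi> (Suc n)) s
       + face_sum G (\<lambda>g. insert_sum Y (n - 1) (\<Phi>\<^sub>0 g)) (insert_sum Y (n - 1) \<Phi>) n s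
       = (\<Sum>x\<in>Y. \<Phi>\<^sub>0 x s) - (\<Sum>x\<in>Y. \<Phi> s)"
proof (cases n)
  case 0
  then show ?thesis
    using len by (simp add: insert_sum_def alt_insert_sum_def face_sum_def alt_sign_Suc sum_subtractf)
next
  case (Suc p)
  define T where "T x = alt_insert_sum x p (\<Phi>\<^sub>0 (hd s)) (tl s)" for x
  define M where "M x j = alt_insert_sum x p \<Phi> (merge G j s)" for x j
  define B where "B x = alt_insert_sum x p \<Phi> (butlast s)" for x
  define L where "L x = (\<Sum>i\<in>{0..p}. \<Phi> (s[i := s ! i \<otimes> x]))" for x
  define R where "R x = (\<Sum>i\<in>{0..p}. \<Phi> (s[i := x \<otimes> s ! i]))" for x
  have len': "length s = Suc p" using len Suc by simp
  have "insert_sum Y n (face_sum G \<Phi>\<^sub>0 \<Phi> (Suc n)) s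
      = (\<Sum>x\<in>Y. \<Phi>\<^sub>0 x s - T x + (L x - R x - (\<Sum>j\<in>{1..<Suc p}. alt_sign j (M x j)))
                 + (- alt_sign (Suc p) (B x) - \<Phi> s))"
    unfolding insert_sum_def face_sum_Suc Suc
    by (simp only: alt_insert_sum_add alt_insert_sum_hd_tl[OF len']
        alt_insert_sum_merge[OF len'] alt_insert_sum_butlast[OF len'] T_def M_def B_def L_def R_def)
  moreover have "face_sum G (\<lambda>g. insert_sum Y (n - 1) (\<Phi>\<^sub>0 g)) (insert_sum Y (n - 1) \<Phi>) n s
      = (\<Sum>x\<in>Y. T x) + (\<Sum>j\<in>{1..<Suc p}. alt_sign j (\<Sum>x\<in>Y. M x j)) + alt_sign (Suc p) (\<Sum>x\<in>Y. B x)"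
    by (simp add: face_sum_def insert_sum_def Suc T_def M_def B_def)
  moreover have "(\<Sum>x\<in>Y. L x) = (\<Sum>x\<in>Y. R x)"
  proof -
    have "(\<Sum>x\<in>Y. \<Phi> (s[i := s ! i \<otimes> x])) = (\<Sum>x\<in>Y. \<Phi> (s[i := x \<otimes> s ! i]))" if "i \<le> p" for i
      using that len' s by (intro sum_conj_closed_mult_commute[OF Y]) auto
    then show ?thesis
      unfolding L_def R_def by (subst (1 2) sum.swap) simp
  qed
  moreover have "(\<Sum>x\<in>Y. \<Sum>j\<in>{1..<Suc p}. alt_sign j (M x j)) = (\<Sum>j\<in>{1..<Suc p}. alt_sign j (\<Sum>x\<in>Y. M x j))"
    by (subst sum.swap) (simp add: alt_sign_sum)
  ultimately show ?thesis
    by (simp add: sum.distrib sum_subtractf alt_sign_sum sum_negf)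
qed

end

lemma cochain_cobd_eq_face_sum:
  "cochain_cobd G act n f \<tau> =
     (if \<tau> \<in> tuples G (Suc n) then face_sum G (\<lambda>g r. act g (f r)) f (Suc n) \<tau> else 0)"
  by (simp add: cochain_cobd_def face_sum_Suc atLeastLessThanSuc_atLeastAtMost)

definition cochain_homotopy ::
  "('g, 'b) monoid_scheme \<Rightarrow> 'g set \<Rightarrow> nat \<Rightarrow> ('g list \<Rightarrow> 'm::ab_group_add) \<Rightarrow> 'g list \<Rightarrow> 'm"
where
  "cochain_homotopy G Y n f \<sigma> = (if \<sigma> \<in> tuples G n then insert_sum Y n f \<sigma> else 0)"

lemma cochain_homotopy_in_cochains: "cochain_homotopy G Y n f \<in> cochains G n"
  by (simp add: cochains_def cochain_homotopy_def)

lemma cochain_homotopy_zero [simp]: "cochain_homotopy G Y n (\<lambda>_. 0) = (\<lambda>_. 0)"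
  by (simp add: cochain_homotopy_def insert_sum_def alt_insert_sum_def fun_eq_iff)

text \<open>
  Chains are finitely supported functions; \<open>K \<sigma> m\<close> is the image of the elementary chain
  \<open>[\<sigma>] \<otimes> m\<close> under the operator \<open>linear_extension K\<close>.
\<close>
definition linear_extension ::
  "('k \<Rightarrow> 'm \<Rightarrow> 'k \<Rightarrow> 'a::comm_monoid_add) \<Rightarrow> ('k \<Rightarrow> 'm::zero) \<Rightarrow> 'k \<Rightarrow> 'a"
where
  "linear_extension K c \<tau> = (\<Sum>\<sigma>\<in>{\<sigma>. c \<sigma> \<noteq> 0}. K \<sigma> (c \<sigma>) \<tau>)"

lemma formal_sum_support:
  "{\<tau>. (\<Sum>a\<in>A. if \<rho> a = \<tau> then f a else 0) \<noteq> (0::'a::comm_monoid_add)} \<subseteq> \<rho> ` A"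
proof
  fix \<tau> assume "\<tau> \<in> {\<tau>. (\<Sum>a\<in>A. if \<rho> a = \<tau> then f a else 0) \<noteq> 0}"
  then have "(\<Sum>a\<in>A. if \<rho> a = \<tau> then f a else 0) \<noteq> 0" by simp
  then obtain a where "a \<in> A" "(if \<rho> a = \<tau> then f a else 0) \<noteq> 0"
    by (rule sum.not_neutral_contains_not_neutral)
  then show "\<tau> \<in> \<rho> ` A" by (auto split: if_splits)
qed

lemma linear_extension_formal_sum:
  fixes f :: "'i \<Rightarrow> 'm::ab_group_add" and K :: "'k \<Rightarrow> 'm \<Rightarrow> 'k \<Rightarrow> 'a::ab_group_add"
  assumes A: "finite A" and K: "\<And>a t. a \<in> A \<Longrightarrow> additive (\<lambda>m. K (\<rho> a) m t)"
  shows "linear_extension K (\<lambda>\<tau>. \<Sum>a\<in>A. if \<rho> a = \<tau> then f a else 0) t = (\<Sum>a\<in>A. K (\<rho> a) (f a) t)"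
proof -
  define c where "c \<tau> = (\<Sum>a\<in>A. if \<rho> a = \<tau> then f a else 0)" for \<tau>
  have zero: "K (\<rho> a) 0 t = 0" if "a \<in> A" for a
    using K[OF that] by (rule additive.zero)
  have "linear_extension K c t = (\<Sum>\<sigma>\<in>\<rho> ` A. K \<sigma> (c \<sigma>) t)"
    unfolding linear_extension_def
    using A formal_sum_support[where A=A and \<rho>=\<rho> and f=f]
    by (intro sum.mono_neutral_left) (auto simp: c_def zero)
  also have "\<dots> = (\<Sum>\<sigma>\<in>\<rho> ` A. \<Sum>a\<in>A. if \<rho> a = \<sigma> then K (\<rho> a) (f a) t else 0)"
  proof (rule sum.cong[OF refl])
    fix \<sigma> assume "\<sigma> \<in> \<rho> ` A"
    then obtain a' where a': "a' \<in> A" "\<sigma> = \<rho> a'" by blast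
    have "K \<sigma> (c \<sigma>) t = (\<Sum>a\<in>A. K \<sigma> (if \<rho> a = \<sigma> then f a else 0) t)"
      unfolding c_def a'(2) using K[OF a'(1)] by (rule additive.sum)
    also have "\<dots> = (\<Sum>a\<in>A. if \<rho> a = \<sigma> then K (\<rho> a) (f a) t else 0)"
      using zero a' by (intro sum.cong) auto
    finally show "K \<sigma> (c \<sigma>) t = (\<Sum>a\<in>A. if \<rho> a = \<sigma> then K (\<rho> a) (f a) t else 0)" .
  qed
  also have "\<dots> = (\<Sum>a\<in>A. K (\<rho> a) (f a) t)"
    using A by (subst sum.swap) (simp add: sum.delta')
  finally show ?thesis unfolding c_def .
qed

lemma linear_extension_comp:
  assumes "finite {\<sigma>. c \<sigma> \<noteq> 0}" "additive Q"
    and "\<And>\<sigma>. c \<sigma> \<noteq> 0 \<Longrightarrow> K \<sigma> 0 \<tau> = 0"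
    and "\<And>\<sigma> m. c \<sigma> \<noteq> 0 \<Longrightarrow> K \<sigma> (Q m) \<tau> = Q (K \<sigma> m \<tau>)"
  shows "linear_extension K (Q \<circ> c) \<tau> = Q (linear_extension K c \<tau>)"
proof -
  have "linear_extension K (Q \<circ> c) \<tau> = (\<Sum>\<sigma>\<in>{\<sigma>. c \<sigma> \<noteq> 0}. K \<sigma> (Q (c \<sigma>)) \<tau>)"
    unfolding linear_extension_def comp_def
    using assms by (intro sum.mono_neutral_left) (auto simp: additive.zero)
  also have "\<dots> = Q (linear_extension K c \<tau>)"
    using assms by (simp add: linear_extension_def additive.sum)
  finally show ?thesis .
qed

lemma chains_comp:
  assumes "c \<in> chains G n" "\<phi> 0 = 0"
  shows "\<phi> \<circ> c \<in> chains G n"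
proof -
  have "{\<sigma>. (\<phi> \<circ> c) \<sigma> \<noteq> 0} \<subseteq> {\<sigma>. c \<sigma> \<noteq> 0}" using assms(2) by auto
  then show ?thesis using assms unfolding chains_def by (auto intro: finite_subset)
qed

lemma linear_extension_zero [simp]: "linear_extension K (\<lambda>_. 0) = (\<lambda>_. 0)"
  by (simp add: linear_extension_def fun_eq_iff)

definition homotopy_kernel :: "'g set \<Rightarrow> nat \<Rightarrow> 'g list \<Rightarrow> 'm \<Rightarrow> 'g list \<Rightarrow> 'm::ab_group_add" where
  "homotopy_kernel Y n \<sigma> m \<tau> = insert_sum Y n (\<lambda>r. if r = \<tau> then m else 0) \<sigma>"

definition chain_homotopy :: "'g set \<Rightarrow> nat \<Rightarrow> ('g list \<Rightarrow> 'm) \<Rightarrow> 'g list \<Rightarrow> 'm::ab_group_add" where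
  "chain_homotopy Y n = linear_extension (homotopy_kernel Y n)"

lemma homotopy_kernel_additive: "additive (\<lambda>m :: 'm::ab_group_add. homotopy_kernel Y n \<sigma> m \<tau>)"
proof
  fix m m' :: 'm
  have "(\<lambda>r. if r = \<tau> then m + m' else 0) = (\<lambda>r. (if r = \<tau> then m else 0) + (if r = \<tau> then m' else 0))"
    by auto
  then show "homotopy_kernel Y n \<sigma> (m + m') \<tau> = homotopy_kernel Y n \<sigma> m \<tau> + homotopy_kernel Y n \<sigma> m' \<tau>"
    by (simp add: homotopy_kernel_def insert_sum_add)
qed

lemma chain_homotopy_formal_sum:
  fixes c :: "'g list \<Rightarrow> 'm::ab_group_add"
  shows "chain_homotopy Y n c = (\<lambda>\<tau>. \<Sum>a\<in>{\<sigma>. c \<sigma> \<noteq> 0} \<times> Y \<times> {0..n}.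
     if insert_nth (snd (snd a)) (fst (snd a)) (fst a) = \<tau> then alt_sign (snd (snd a)) (c (fst a)) else 0)"
  by (simp add: fun_eq_iff chain_homotopy_def linear_extension_def homotopy_kernel_def alt_sign_if_zero
      insert_sum_def alt_insert_sum_def sum.cartesian_product case_prod_beta)

lemma chain_homotopy_in_chains:
  assumes c: "c \<in> chains G n" and Y: "finite Y" "Y \<subseteq> carrier G"
  shows "chain_homotopy Y n c \<in> chains G (Suc n)"
proof -
  let ?A = "{\<sigma>. c \<sigma> \<noteq> 0} \<times> Y \<times> {0..n}"
  let ?\<rho> = "\<lambda>a. insert_nth (snd (snd a)) (fst (snd a)) (fst a)"
  have sub: "{\<tau>. chain_homotopy Y n c \<tau> \<noteq> 0} \<subseteq> ?\<rho> ` ?A"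
    unfolding chain_homotopy_formal_sum by (rule formal_sum_support)
  have "finite {\<tau>. chain_homotopy Y n c \<tau> \<noteq> 0}"
    by (rule finite_subset[OF sub]) (use c Y in \<open>simp add: chains_def\<close>)
  moreover have "?\<rho> a \<in> tuples G (Suc n)" if "a \<in> ?A" for a
    using that c Y by (auto simp: chains_def intro!: tuples_insert_nth)
  ultimately show ?thesis
    unfolding chains_def using sub by blast
qed

section \<open>Inverting \<open>N - c\<close> for nilpotent \<open>N\<close>\<close>

definition neumann_inverse :: "('a::monoid_mult \<Rightarrow> 'b \<Rightarrow> 'b) \<Rightarrow> ('b \<Rightarrow> 'b) \<Rightarrow> 'a \<Rightarrow> nat \<Rightarrow> 'b \<Rightarrow> 'b::ab_group_add"
  where "neumann_inverse scale N d k m = - (\<Sum>j\<le>k. scale (d ^ Suc j) ((N ^^ j) m))"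

context Modules.module
begin

lemma neumann_inverse_left_inverse:
  assumes N: "additive N" "\<And>a x. N (a *s x) = a *s N x"
    and d: "d * c = 1" and nilpotent: "(N ^^ Suc k) m = 0"
  shows "neumann_inverse scale N d k (N m - c *s m) = m"
proof -
  define b where "b j = d ^ j *s (N ^^ j) m" for j
  have Npow: "(N ^^ j) (N m - c *s m) = (N ^^ Suc j) m - c *s (N ^^ j) m" for j
  proof (induction j)
    case (Suc j)
    then show ?case by (simp add: N additive.diff)
  qed simp
  have "d * d ^ j * c = d ^ j" for j
    using d by (metis mult.commute mult.left_commute mult_1_right)
  then have "d ^ Suc j *s (N ^^ j) (N m - c *s m) = b (Suc j) - b j" for j
    by (simp add: Npow b_def scale_right_diff_distrib)
  then have "neumann_inverse scale N d k (N m - c *s m) = - (\<Sum>j<Suc k. b (Suc j) - b j)"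
    by (simp add: neumann_inverse_def lessThan_Suc_atMost)
  also have "\<dots> = b 0 - b (Suc k)"
    by (simp only: sum_lessThan_telescope minus_diff_eq)
  also have "\<dots> = m"
    using nilpotent by (simp add: b_def)
  finally show ?thesis .
qed

lemma additive_neumann_inverse:
  assumes "additive N"
  shows "additive (neumann_inverse scale N d k)"
proof
  have "(N ^^ j) (x + y) = (N ^^ j) x + (N ^^ j) y" for j x y
    by (induction j) (simp_all add: additive.add[OF assms])
  then show "neumann_inverse scale N d k (x + y) = neumann_inverse scale N d k x + neumann_inverse scale N d k y"
    for x y
    by (simp add: neumann_inverse_def scale_right_distrib sum.distrib)
qed

lemma neumann_inverse_commute:
  assumes "additive \<phi>" "\<And>x. \<phi> (N x) = N (\<phi> x)" "\<And>a x. \<phi> (a *s x) = a *s \<phi> x"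
  shows "\<phi> (neumann_inverse scale N d k x) = neumann_inverse scale N d k (\<phi> x)"
proof -
  have "\<phi> ((N ^^ j) x) = (N ^^ j) (\<phi> x)" for j
    by (induction j) (simp_all add: assms(2))
  then show ?thesis
    by (simp add: neumann_inverse_def additive.minus[OF assms(1)] additive.sum[OF assms(1)] assms(3))
qed

end

section \<open>Vanishing of homology and cohomology\<close>

locale rational_rep = group G for G :: "('g, 'b) monoid_scheme" (structure) +
  fixes scl :: "rat \<Rightarrow> 'm::ab_group_add \<Rightarrow> 'm" and act :: "'g \<Rightarrow> 'm \<Rightarrow> 'm"
  assumes rat_rep: "rat_rep G scl act"
begin

sublocale scalar: Modules.module scl
  using rat_rep by (simp add: rat_rep_def)

lemma act_additive: "g \<in> carrier G \<Longrightarrow> additive (act g)"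
  using rat_rep by unfold_locales (simp add: rat_rep_def)

lemma act_scl: "g \<in> carrier G \<Longrightarrow> act g (scl q x) = scl q (act g x)"
  using rat_rep by (simp add: rat_rep_def)

lemma act_one [simp]: "act \<one> x = x"
  using rat_rep by (simp add: rat_rep_def)

lemma act_mult: "g \<in> carrier G \<Longrightarrow> h \<in> carrier G \<Longrightarrow> act (g \<otimes> h) x = act g (act h x)"
  using rat_rep by (simp add: rat_rep_def)

lemmas act_add = additive.add[OF act_additive]
  and act_zero = additive.zero[OF act_additive]
  and act_sum = additive.sum[OF act_additive]
  and act_alt_sign = additive_alt_sign[OF act_additive]

lemma cochain_cobd_comp:
  assumes "additive Q" "\<And>g m. g \<in> carrier G \<Longrightarrow> Q (act g m) = act g (Q m)"
  shows "cochain_cobd G act n (Q \<circ> f) = Q \<circ> cochain_cobd G act n f"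
  using assms tuples_Suc_hd[of _ G n]
  by (simp add: fun_eq_iff cochain_cobd_def additive.add additive.sum additive.zero additive_alt_sign)

lemma cochain_homotopy_formula:
  assumes Y: "conj_closed G Y" and \<sigma>: "\<sigma> \<in> tuples G n"
  shows "cochain_cobd G act (n - 1) (cochain_homotopy G Y (n - 1) f) \<sigma>
       + cochain_homotopy G Y n (cochain_cobd G act n f) \<sigma>
       = (\<Sum>y\<in>Y. act y (f \<sigma>)) - (\<Sum>y\<in>Y. f \<sigma>)"
proof -
  have Yc: "Y \<subseteq> carrier G" using Y by (simp add: conj_closed_def)
  have "cochain_homotopy G Y n (cochain_cobd G act n f) \<sigma>
      = insert_sum Y n (face_sum G (\<lambda>g r. act g (f r)) f (Suc n)) \<sigma>"
    using \<sigma> Yc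
    by (auto simp: cochain_homotopy_def cochain_cobd_eq_face_sum insert_sum_def alt_insert_sum_def
        tuples_insert_nth intro!: sum.cong)
  moreover have "cochain_cobd G act (n - 1) (cochain_homotopy G Y (n - 1) f) \<sigma>
      = face_sum G (\<lambda>g. insert_sum Y (n - 1) (\<lambda>r. act g (f r))) (insert_sum Y (n - 1) f) n \<sigma>"
  proof (cases n)
    case 0
    then show ?thesis using \<sigma> by (simp add: cochain_cobd_def face_sum_def tuples_def)
  next
    case (Suc p)
    have "hd \<sigma> \<in> carrier G" using tuples_Suc_hd \<sigma> Suc by simp
    then have "act (hd \<sigma>) (insert_sum Y p f r) = insert_sum Y p (\<lambda>r. act (hd \<sigma>) (f r)) r" for r
      by (simp add: insert_sum_def alt_insert_sum_def act_sum act_alt_sign)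
    then show ?thesis
      using \<sigma> Suc
      by (simp add: cochain_cobd_eq_face_sum face_sum_Suc cochain_homotopy_def tuples_Suc_tl
          tuples_Suc_butlast tuples_Suc_merge)
  qed
  moreover have "length \<sigma> = n" "set \<sigma> \<subseteq> carrier G" using \<sigma> by (simp_all add: tuples_def)
  ultimately show ?thesis
    using insert_sum_face_sum[OF Y, of \<sigma> n "\<lambda>g r. act g (f r)" f] by (simp add: add.commute)
qed

lemma group_cohomology_vanishes_if_left_inverse:
  assumes Y: "conj_closed G Y"
    and Q: "additive Q" "\<And>g m. g \<in> carrier G \<Longrightarrow> Q (act g m) = act g (Q m)"
    and left_inverse: "\<And>m. Q ((\<Sum>y\<in>Y. act y m) - (\<Sum>y\<in>Y. m)) = m"
  shows "group_cohomology_vanishes G act n TYPE('m)"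
  unfolding group_cohomology_vanishes_def
proof (intro ballI impI)
  fix f :: "'g list \<Rightarrow> 'm"
  assume f: "f \<in> cochains G n" and cocycle: "cochain_cobd G act n f = (\<lambda>_. 0)"
  have Q0: "Q 0 = 0" using Q(1) by (rule additive.zero)
  have f_eq: "f \<sigma> = Q (cochain_cobd G act (n - 1) (cochain_homotopy G Y (n - 1) f) \<sigma>)"
    if "\<sigma> \<in> tuples G n" for \<sigma>
    using cochain_homotopy_formula[OF Y that, of f] left_inverse[of "f \<sigma>"] cocycle by simp
  show "case n of 0 \<Rightarrow> f = (\<lambda>_. 0) | Suc j \<Rightarrow> \<exists>h\<in>cochains G j. cochain_cobd G act j h = f"
  proof (cases n)
    case 0
    have "f \<sigma> = 0" for \<sigma>
      using f_eq[of \<sigma>] f 0 Q0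
      by (cases "\<sigma> \<in> tuples G 0") (auto simp: cochains_def cochain_cobd_def tuples_def)
    then show ?thesis using 0 by auto
  next
    case (Suc j)
    have "Q (cochain_cobd G act j (cochain_homotopy G Y j f) \<sigma>) = f \<sigma>" for \<sigma>
      using f_eq[of \<sigma>] f Suc Q0
      by (cases "\<sigma> \<in> tuples G n") (auto simp: cochains_def cochain_cobd_def)
    then have "cochain_cobd G act j (Q \<circ> cochain_homotopy G Y j f) = f"
      by (simp add: cochain_cobd_comp[OF Q] fun_eq_iff)
    moreover have "Q \<circ> cochain_homotopy G Y j f \<in> cochains G j"
      using cochain_homotopy_in_cochains[of G Y j f] Q0 by (simp add: cochains_def)
    ultimately show ?thesis using Suc by auto
  qed
qed

definition bar_kernel :: "nat \<Rightarrow> 'g list \<Rightarrow> 'm \<Rightarrow> 'g list \<Rightarrow> 'm" where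
  "bar_kernel n \<sigma> m \<tau> = face_sum G (\<lambda>g r. if r = \<tau> then act (inv g) m else 0) (\<lambda>r. if r = \<tau> then m else 0) n \<sigma>"

lemma chain_bd_eq_linear_extension: "chain_bd G act n = linear_extension (bar_kernel n)"
  by (simp add: fun_eq_iff chain_bd_def linear_extension_def bar_kernel_def face_sum_def alt_sign_if_zero)

lemma bar_kernel_comp:
  assumes \<sigma>: "\<sigma> \<in> tuples G n" and Q: "additive Q" "\<And>g m. g \<in> carrier G \<Longrightarrow> Q (act g m) = act g (Q m)"
  shows "bar_kernel n \<sigma> (Q m) \<tau> = Q (bar_kernel n \<sigma> m \<tau>)"
proof (cases n)
  case 0
  then show ?thesis using Q(1) by (simp add: bar_kernel_def face_sum_def additive.zero)
next
  case (Suc p)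
  then have "inv (hd \<sigma>) \<in> carrier G" using \<sigma> tuples_Suc_hd by blast
  moreover have "Q (if b then x else 0) = (if b then Q x else 0)" for b x
    using additive.zero[OF Q(1)] by simp
  ultimately show ?thesis
    unfolding bar_kernel_def face_sum_additive[OF Q(1)] using Q(2) by (intro face_sum_cong) simp_all
qed

lemma bar_kernel_additive:
  assumes \<sigma>: "\<sigma> \<in> tuples G n"
  shows "additive (\<lambda>m. bar_kernel n \<sigma> m \<tau>)"
proof (cases n)
  case 0
  then show ?thesis by unfold_locales (simp add: bar_kernel_def face_sum_def)
next
  case (Suc p)
  then have h: "inv (hd \<sigma>) \<in> carrier G" using \<sigma> tuples_Suc_hd by blast
  have "(if b then x + y else 0) = (if b then x else 0) + (if b then y else (0::'m))" for b x y
    by simp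
  with h show ?thesis
    by unfold_locales (simp add: bar_kernel_def face_sum_def act_add alt_sign_add sum.distrib ac_simps)
qed

lemma chain_bd_comp:
  assumes c: "c \<in> chains G n" and Q: "additive Q" "\<And>g m. g \<in> carrier G \<Longrightarrow> Q (act g m) = act g (Q m)"
  shows "chain_bd G act n (Q \<circ> c) = Q \<circ> chain_bd G act n c"
proof
  fix \<tau>
  have "\<sigma> \<in> tuples G n" if "c \<sigma> \<noteq> 0" for \<sigma> using c that by (simp add: chains_def)
  then have "linear_extension (bar_kernel n) (Q \<circ> c) \<tau> = Q (linear_extension (bar_kernel n) c \<tau>)"
    using c Q by (intro linear_extension_comp)
      (auto simp: chains_def bar_kernel_comp additive.zero[OF bar_kernel_additive])
  then show "chain_bd G act n (Q \<circ> c) \<tau> = (Q \<circ> chain_bd G act n c) \<tau>"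
    by (simp add: chain_bd_eq_linear_extension)
qed

lemma chain_bd_chain_homotopy:
  assumes c: "c \<in> chains G n" and Y: "finite Y" "Y \<subseteq> carrier G"
  shows "chain_bd G act (Suc n) (chain_homotopy Y n c) t
       = (\<Sum>\<sigma>\<in>{\<sigma>. c \<sigma> \<noteq> 0}. insert_sum Y n (\<lambda>r. bar_kernel (Suc n) r (c \<sigma>) t) \<sigma>)"
proof -
  let ?A = "{\<sigma>. c \<sigma> \<noteq> 0} \<times> Y \<times> {0..n}"
  have tup: "insert_nth (snd (snd a)) (fst (snd a)) (fst a) \<in> tuples G (Suc n)" if "a \<in> ?A" for a
    using that c Y by (auto simp: chains_def intro!: tuples_insert_nth)
  have "chain_bd G act (Suc n) (chain_homotopy Y n c) t
      = (\<Sum>a\<in>?A. bar_kernel (Suc n) (insert_nth (snd (snd a)) (fst (snd a)) (fst a))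
                                   (alt_sign (snd (snd a)) (c (fst a))) t)"
    unfolding chain_bd_eq_linear_extension chain_homotopy_formal_sum
    using c Y tup by (intro linear_extension_formal_sum) (auto simp: chains_def bar_kernel_additive)
  also have "\<dots> = (\<Sum>a\<in>?A. alt_sign (snd (snd a))
        (bar_kernel (Suc n) (insert_nth (snd (snd a)) (fst (snd a)) (fst a)) (c (fst a)) t))"
    using tup by (intro sum.cong refl) (simp add: additive_alt_sign[OF bar_kernel_additive])
  also have "\<dots> = (\<Sum>\<sigma>\<in>{\<sigma>. c \<sigma> \<noteq> 0}. insert_sum Y n (\<lambda>r. bar_kernel (Suc n) r (c \<sigma>) t) \<sigma>)"
    by (simp add: sum.cartesian_product insert_sum_def alt_insert_sum_def split_def)
  finally show ?thesis .
qed

lemma chain_bd_0: "chain_bd G act 0 c = (\<lambda>_. 0)"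
  by (simp add: fun_eq_iff chain_bd_def)

lemma chain_homotopy_chain_bd:
  assumes c: "c \<in> chains G n"
  shows "chain_homotopy Y (n - 1) (chain_bd G act n c) t
       = (\<Sum>\<sigma>\<in>{\<sigma>. c \<sigma> \<noteq> 0}. face_sum G (\<lambda>g r. homotopy_kernel Y (n - 1) r (act (inv g) (c \<sigma>)) t)
                                          (\<lambda>r. homotopy_kernel Y (n - 1) r (c \<sigma>) t) n \<sigma>)"
proof (cases n)
  case 0
  then show ?thesis by (simp add: chain_bd_0 chain_homotopy_def face_sum_def)
next
  case (Suc p)
  define coeff where "coeff \<sigma> j = (if j = 0 then act (inv (hd \<sigma>)) (c \<sigma>) else alt_sign j (c \<sigma>))" for \<sigma> j
  have point_mass: "additive (\<lambda>m. if r = \<tau> then m else 0)" for r \<tau> :: "'g list"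
    by unfold_locales simp
  have "chain_bd G act n c = (\<lambda>\<tau>. \<Sum>a\<in>{\<sigma>. c \<sigma> \<noteq> 0} \<times> {0..Suc p}.
      if bar_face G n (snd a) (fst a) = \<tau> then coeff (fst a) (snd a) else 0)"
    unfolding chain_bd_eq_linear_extension linear_extension_def bar_kernel_def Suc
      face_sum_eq_sum_bar_face[OF point_mass] sum.cartesian_product' fst_conv snd_conv coeff_def ..
  then have "chain_homotopy Y (n - 1) (chain_bd G act n c) t
      = (\<Sum>a\<in>{\<sigma>. c \<sigma> \<noteq> 0} \<times> {0..Suc p}. homotopy_kernel Y p (bar_face G n (snd a) (fst a)) (coeff (fst a) (snd a)) t)"
    unfolding chain_homotopy_def Suc using c
    by (simp add: linear_extension_formal_sum homotopy_kernel_additive chains_def)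
  also have "\<dots> = (\<Sum>\<sigma>\<in>{\<sigma>. c \<sigma> \<noteq> 0}. face_sum G (\<lambda>g r. homotopy_kernel Y p r (act (inv g) (c \<sigma>)) t)
                                          (\<lambda>r. homotopy_kernel Y p r (c \<sigma>) t) n \<sigma>)"
    unfolding Suc face_sum_eq_sum_bar_face[OF homotopy_kernel_additive] sum.cartesian_product'
      fst_conv snd_conv coeff_def ..
  finally show ?thesis using Suc by simp
qed

lemma chain_homotopy_formula:
  assumes Y: "conj_closed G Y" "finite Y" and c: "c \<in> chains G n"
  shows "chain_bd G act (Suc n) (chain_homotopy Y n c) t + chain_homotopy Y (n - 1) (chain_bd G act n c) t
       = (\<Sum>y\<in>Y. act (inv y) (c t)) - (\<Sum>y\<in>Y. c t)"
proof -
  have Yc: "Y \<subseteq> carrier G" using Y by (simp add: conj_closed_def)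
  have "insert_sum Y n (\<lambda>r. bar_kernel (Suc n) r (c \<sigma>) t) \<sigma>
      + face_sum G (\<lambda>g r. homotopy_kernel Y (n - 1) r (act (inv g) (c \<sigma>)) t)
                   (\<lambda>r. homotopy_kernel Y (n - 1) r (c \<sigma>) t) n \<sigma>
      = (if \<sigma> = t then (\<Sum>y\<in>Y. act (inv y) (c \<sigma>)) - (\<Sum>y\<in>Y. c \<sigma>) else 0)"
    if "c \<sigma> \<noteq> 0" for \<sigma>
  proof -
    have "length \<sigma> = n" "set \<sigma> \<subseteq> carrier G" using c that by (simp_all add: chains_def tuples_def)
    from insert_sum_face_sum[OF Y(1) this, of "\<lambda>g r. if r = t then act (inv g) (c \<sigma>) else 0"
        "\<lambda>r. if r = t then c \<sigma> else 0"]
    show ?thesis by (simp add: bar_kernel_def homotopy_kernel_def)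
  qed
  note per_simplex = this
  have "chain_bd G act (Suc n) (chain_homotopy Y n c) t + chain_homotopy Y (n - 1) (chain_bd G act n c) t
      = (\<Sum>\<sigma>\<in>{\<sigma>. c \<sigma> \<noteq> 0}. if \<sigma> = t then (\<Sum>y\<in>Y. act (inv y) (c \<sigma>)) - (\<Sum>y\<in>Y. c \<sigma>) else 0)"
    unfolding chain_bd_chain_homotopy[OF c Y(2) Yc] chain_homotopy_chain_bd[OF c] sum.distrib[symmetric]
    by (rule sum.cong[OF refl]) (rule per_simplex, simp)
  also have "\<dots> = (\<Sum>y\<in>Y. act (inv y) (c t)) - (\<Sum>y\<in>Y. c t)"
    using c Yc by (simp add: chains_def subsetD act_zero)
  finally show ?thesis .
qed

text \<open>The chain differential twists by \<open>g\<^sub>1\<inverse>\<close>, so the homotopy inserts inverses of \<open>Y\<close>.\<close>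
lemma group_homology_vanishes_if_left_inverse:
  assumes Y: "conj_closed G Y" "finite Y"
    and Q: "additive Q" "\<And>g m. g \<in> carrier G \<Longrightarrow> Q (act g m) = act g (Q m)"
    and left_inverse: "\<And>m. Q ((\<Sum>y\<in>Y. act y m) - (\<Sum>y\<in>Y. m)) = m"
  shows "group_homology_vanishes G act n TYPE('m)"
  unfolding group_homology_vanishes_def
proof (intro ballI impI)
  fix c :: "'g list \<Rightarrow> 'm"
  assume c: "c \<in> chains G n" and cycle: "chain_bd G act n c = (\<lambda>_. 0)"
  let ?Y = "(\<lambda>y. inv y) ` Y"
  have Yc: "Y \<subseteq> carrier G" using Y by (simp add: conj_closed_def)
  have inj: "inj_on (\<lambda>y. inv y) Y"
    using Yc by (intro inj_onI) (metis inv_inv subsetD)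
  have Y': "conj_closed G ?Y" "finite ?Y" "?Y \<subseteq> carrier G"
    using conj_closed_image_inv[OF Y(1)] Y(2) Yc by auto
  have "chain_bd G act (Suc n) (chain_homotopy ?Y n c) t = (\<Sum>y\<in>Y. act y (c t)) - (\<Sum>y\<in>Y. c t)" for t
    using chain_homotopy_formula[OF Y'(1,2) c, of t] Yc
    by (simp add: cycle chain_homotopy_def sum.reindex[OF inj] subsetD)
  moreover have "chain_bd G act (Suc n) (Q \<circ> chain_homotopy ?Y n c) = Q \<circ> chain_bd G act (Suc n) (chain_homotopy ?Y n c)"
    using chain_homotopy_in_chains[OF c Y'(2,3)] Q by (rule chain_bd_comp)
  ultimately have "chain_bd G act (Suc n) (Q \<circ> chain_homotopy ?Y n c) = c"
    by (simp add: left_inverse fun_eq_iff)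
  moreover have "Q \<circ> chain_homotopy ?Y n c \<in> chains G (Suc n)"
    using chain_homotopy_in_chains[OF c Y'(2,3)] additive.zero[OF Q(1)] by (rule chains_comp)
  ultimately show "\<exists>b\<in>chains G (Suc n). chain_bd G act (Suc n) b = c" by blast
qed

section \<open>Invertibility of \<open>\<Sum>\<^sub>y\<^sub>\<in>\<^sub>Y (y - 1)\<close> on gr-odd modules\<close>

definition norm_plus :: "'g set \<Rightarrow> 'm \<Rightarrow> 'm" where
  "norm_plus Y m = (\<Sum>y\<in>Y. act y m + m)"

lemma additive_norm_plus: "Y \<subseteq> carrier G \<Longrightarrow> additive (norm_plus Y)"
  by unfold_locales (simp add: norm_plus_def act_add subsetD sum.distrib[symmetric] ac_simps)

lemma norm_plus_scl: "Y \<subseteq> carrier G \<Longrightarrow> norm_plus Y (scl q m) = scl q (norm_plus Y m)"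
  by (simp add: norm_plus_def act_scl subsetD scalar.scale_sum_right scalar.scale_right_distrib)

lemma norm_plus_act:
  assumes Y: "conj_closed G Y" and g: "g \<in> carrier G"
  shows "norm_plus Y (act g m) = act g (norm_plus Y m)"
proof -
  have Yc: "Y \<subseteq> carrier G" using Y by (simp add: conj_closed_def)
  have "act g (act y m) = act (g \<otimes> y \<otimes> inv g) (act g m)" if "y \<in> Y" for y
    using that g Yc by (simp add: act_mult[symmetric] m_assoc subsetD)
  then have "act g (norm_plus Y m) = (\<Sum>y\<in>Y. act (g \<otimes> y \<otimes> inv g) (act g m) + act g m)"
    unfolding norm_plus_def using g by (simp add: act_sum act_add)
  also have "\<dots> = norm_plus Y (act g m)"
    unfolding norm_plus_def
    using sum.reindex_bij_betw[OF conj_closed_bij_betw[OF Y g], of "\<lambda>y. act y (act g m) + act g m"] by simp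
  finally show ?thesis by simp
qed

lemma sum_act_diff_eq_norm_plus:
  "(\<Sum>y\<in>Y. act y m) - (\<Sum>y\<in>Y. m) = norm_plus Y m - scl (2 * of_nat (card Y)) m"
proof -
  have "scl (2 * of_nat (card Y)) m = (\<Sum>y\<in>Y. m) + (\<Sum>y\<in>Y. m)"
    by (simp only: scalar.sum_constant_scale mult_2 scalar.scale_left_distrib)
  moreover have "a - b = a + b - (b + b)" for a b :: 'm
    by simp
  ultimately show ?thesis
    unfolding norm_plus_def sum.distrib by simp
qed

lemma sum_act_diff_left_inverse:
  assumes Y: "conj_closed G Y" "finite Y" "Y \<noteq> {}" and nilpotent: "\<And>m. (norm_plus Y ^^ Suc k) m = 0"
  obtains Q where "additive Q" "\<And>g m. g \<in> carrier G \<Longrightarrow> Q (act g m) = act g (Q m)"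
    "\<And>m. Q ((\<Sum>y\<in>Y. act y m) - (\<Sum>y\<in>Y. m)) = m"
proof
  have Yc: "Y \<subseteq> carrier G" using Y by (simp add: conj_closed_def)
  define c :: rat where "c = 2 * of_nat (card Y)"
  have c: "1 / c * c = 1" using Y by (simp add: c_def)
  let ?Q = "neumann_inverse scl (norm_plus Y) (1 / c) k"
  show "additive ?Q"
    using Yc by (intro scalar.additive_neumann_inverse additive_norm_plus)
  show "?Q (act g m) = act g (?Q m)" if "g \<in> carrier G" for g m
    using that Y Yc
    by (intro scalar.neumann_inverse_commute[symmetric] act_additive norm_plus_act[symmetric] act_scl)
  show "?Q ((\<Sum>y\<in>Y. act y m) - (\<Sum>y\<in>Y. m)) = m" for m
    unfolding sum_act_diff_eq_norm_plus c_def[symmetric]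
    using Yc c nilpotent by (intro scalar.neumann_inverse_left_inverse additive_norm_plus norm_plus_scl)
qed

lemma is_submodule_sum:
  assumes "is_submodule G scl act S" "\<And>a. a \<in> A \<Longrightarrow> f a \<in> S"
  shows "sum f A \<in> S"
  using assms(2) by (induction A rule: infinite_finite_induct) (use assms(1) in \<open>auto simp: is_submodule_def\<close>)

lemma norm_plus_conjugacy_class_mem:
  assumes \<iota>: "\<iota> \<in> carrier G" and S: "is_submodule G scl act S" and T: "is_submodule G scl act T"
    and step: "\<forall>m\<in>T. act \<iota> m + m \<in> S" and m: "m \<in> T"
  shows "norm_plus (conjugacy_class G \<iota>) m \<in> S"
  unfolding norm_plus_def
proof (rule is_submodule_sum[OF S])
  fix y assume "y \<in> conjugacy_class G \<iota>"
  then obtain g where g: "g \<in> carrier G" "y = g \<otimes> \<iota> \<otimes> inv g" by (auto simp: conjugacy_class_def)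
  have "act (inv g) m \<in> T" using T m g by (simp add: is_submodule_def)
  then have "act g (act \<iota> (act (inv g) m) + act (inv g) m) \<in> S"
    using S step g by (simp add: is_submodule_def)
  then show "act y m + m \<in> S"
    using g \<iota> by (simp add: act_add act_mult[symmetric] m_assoc)
qed

lemma gr_odd_norm_plus_nilpotent:
  assumes \<iota>: "\<iota> \<in> carrier G" and odd: "gr_odd G scl act \<iota>"
  obtains k where "\<And>m. (norm_plus (conjugacy_class G \<iota>) ^^ Suc k) m = 0"
proof -
  let ?N = "norm_plus (conjugacy_class G \<iota>)"
  obtain F k where F: "\<forall>i\<le>k. is_submodule G scl act (F i)" and top: "F k = UNIV"
    and odd0: "\<forall>m\<in>F 0. act \<iota> m = - m" and step: "\<forall>i<k. \<forall>m\<in>F (Suc i). act \<iota> m + m \<in> F i"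
    using odd unfolding gr_odd_def by blast
  \<comment> \<open>\<open>{0}\<close> plays the role of \<open>F (-1)\<close>\<close>
  have zero: "is_submodule G scl act {0}"
    by (simp add: is_submodule_def act_zero)
  have filtration: "(?N ^^ j) m \<in> F (k - j)" if "j \<le> k" for j m
    using that
  proof (induction j)
    case (Suc j)
    then have "(?N ^^ j) m \<in> F (Suc (k - Suc j))" by (simp add: Suc_diff_Suc)
    moreover have "k - Suc j < k" using Suc.prems by simp
    then have "is_submodule G scl act (F (k - Suc j))" "is_submodule G scl act (F (Suc (k - Suc j)))"
      and "\<forall>m\<in>F (Suc (k - Suc j)). act \<iota> m + m \<in> F (k - Suc j)"
      using F step by simp_all
    ultimately show ?case
      using norm_plus_conjugacy_class_mem[OF \<iota>] by simp
  qed (simp add: top)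
  have "is_submodule G scl act (F 0)" "\<forall>m\<in>F 0. act \<iota> m + m \<in> {0}"
    using F odd0 by simp_all
  then have "?N m' = 0" if "m' \<in> F 0" for m'
    using norm_plus_conjugacy_class_mem[OF \<iota> zero _ _ that] by simp
  then have "(?N ^^ Suc k) m = 0" for m
    using filtration[of k m] by simp
  then show ?thesis by (rule that)
qed

end

theorem proposition3p4p5:
  fixes G :: "('g, 'b) monoid_scheme"
    and scl :: "rat \<Rightarrow> 'm::ab_group_add \<Rightarrow> 'm"
    and act :: "'g \<Rightarrow> 'm \<Rightarrow> 'm"
    and \<iota> :: 'g
  assumes "group G"
    and "\<iota> \<in> carrier G"
    and "\<exists>L. L \<lhd> G \<and> finite L \<and>
           central_mod G L \<iota>"
    and "rat_rep G scl act"
    and "gr_odd G scl act \<iota>"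
  shows "\<forall>i. group_homology_vanishes G act i TYPE('m) \<and>
             group_cohomology_vanishes G act i TYPE('m)"
proof -
  interpret rational_rep G scl act
    using assms(1,4) by (intro rational_rep.intro rational_rep_axioms.intro)
  let ?Y = "conjugacy_class G \<iota>"
  obtain L where L: "L \<lhd> G" "finite L" "central_mod G L \<iota>" using assms(3) by blast
  have Y: "conj_closed G ?Y" "finite ?Y" "?Y \<noteq> {}"
    using conj_closed_conjugacy_class conjugacy_class_mem finite_conjugacy_class_if_central_mod[OF L]
      assms(2) by auto
  obtain k where "\<And>m. (norm_plus ?Y ^^ Suc k) m = 0"
    using gr_odd_norm_plus_nilpotent[OF assms(2,5)] by blast
  then obtain Q where "additive Q" "\<And>g m. g \<in> carrier G \<Longrightarrow> Q (act g m) = act g (Q m)"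
    "\<And>m. Q ((\<Sum>y\<in>?Y. act y m) - (\<Sum>y\<in>?Y. m)) = m"
    using sum_act_diff_left_inverse[OF Y] by blast
  then show ?thesis
    using group_homology_vanishes_if_left_inverse[OF Y(1,2)]
      group_cohomology_vanishes_if_left_inverse[OF Y(1)] by blast
qed

end
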